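(* A connected graph $G$ belongs to DH $\cap$ co-DH if and only if $G$ admits a sequence of twin eliminations ending in a graph isomorphic to an induced subgraph of the Bull.
   Context: All graphs are finite and simple. A graph is distance-hereditary if it has no induced subgraph isomorphic to a hole (an induced cycle of length at least $5$), the house (a $5$-cycle plus one chord), the domino (a $6$-cycle $v_1\dots v_6$ plus the chord $v_1v_4$), or the gem ($P_4$ plus a vertex adjacent to all four of its vertices). DH $\cap$ co-DH is the class of graphs $G$ such that both $G$ and its complement are distance-hereditary. Two distinct vertices $u,v$ are twins if $N(u)\setminus\{u,v\}=N(v)\setminus\{u,v\}$. A sequence of twin eliminations from $G$ to $H$ is a sequence $G=G_0,G_1,\dots,G_k=H$ ($k\ge 0$) where each $G_{i+1}=G_i-v_i$ for some vertex $v_i$ of $G_i$ having a twin in $G_i$. The Bull is the graph on vertices $a,b,c,d,e$ with edges $ab,bc,ca,ad,be$. *)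

theory Defs
  imports Main
begin

text \<open>A finite simple graph is given by a vertex set V and an adjacency
relation E; only the restriction of E to V matters.\<close>

definition simple_graph :: "'a set \<Rightarrow> ('a \<Rightarrow> 'a \<Rightarrow> bool) \<Rightarrow> bool" where
  "simple_graph V E \<longleftrightarrow> finite V \<and> (\<forall>x\<in>V. \<forall>y\<in>V. E x y \<longleftrightarrow> E y x) \<and> (\<forall>x\<in>V. \<not> E x x)"

definition connected_graph :: "'a set \<Rightarrow> ('a \<Rightarrow> 'a \<Rightarrow> bool) \<Rightarrow> bool" where
  "connected_graph V E \<longleftrightarrow> V \<noteq> {} \<and>
     (\<forall>x\<in>V. \<forall>y\<in>V. (\<lambda>a b. a \<in> V \<and> b \<in> V \<and> E a b)\<^sup>*\<^sup>* x y)"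

definition complement_graph :: "('a \<Rightarrow> 'a \<Rightarrow> bool) \<Rightarrow> 'a \<Rightarrow> 'a \<Rightarrow> bool" where
  "complement_graph E x y \<longleftrightarrow> x \<noteq> y \<and> \<not> E x y"

definition graph_iso :: "'a set \<Rightarrow> ('a \<Rightarrow> 'a \<Rightarrow> bool) \<Rightarrow> 'b set \<Rightarrow> ('b \<Rightarrow> 'b \<Rightarrow> bool) \<Rightarrow> bool" where
  "graph_iso V E W F \<longleftrightarrow> (\<exists>f. bij_betw f V W \<and> (\<forall>x\<in>V. \<forall>y\<in>V. E x y \<longleftrightarrow> F (f x) (f y)))"

definition has_induced :: "'a set \<Rightarrow> ('a \<Rightarrow> 'a \<Rightarrow> bool) \<Rightarrow> 'b set \<Rightarrow> ('b \<Rightarrow> 'b \<Rightarrow> bool) \<Rightarrow> bool" where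
  "has_induced V E W F \<longleftrightarrow> (\<exists>S\<subseteq>V. graph_iso S E W F)"

definition cycle_adj :: "nat \<Rightarrow> nat \<Rightarrow> nat \<Rightarrow> bool" where
  "cycle_adj k i j \<longleftrightarrow> j = (i + 1) mod k \<or> i = (j + 1) mod k"

definition house_adj :: "nat \<Rightarrow> nat \<Rightarrow> bool" where
  "house_adj i j \<longleftrightarrow> cycle_adj 5 i j \<or> {i, j} = {0, 2}"

definition domino_adj :: "nat \<Rightarrow> nat \<Rightarrow> bool" where
  "domino_adj i j \<longleftrightarrow> cycle_adj 6 i j \<or> {i, j} = {0, 3}"

definition gem_adj :: "nat \<Rightarrow> nat \<Rightarrow> bool" where
  "gem_adj i j \<longleftrightarrow> {i, j} \<in> {{0,1},{1,2},{2,3},{4,0},{4,1},{4,2},{4,3}}"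

text \<open>Bull: a=0, b=1, c=2, d=3, e=4; edges ab, bc, ca, ad, be.\<close>
definition bull_adj :: "nat \<Rightarrow> nat \<Rightarrow> bool" where
  "bull_adj i j \<longleftrightarrow> {i, j} \<in> {{0,1},{1,2},{2,0},{0,3},{1,4}}"

definition distance_hereditary :: "'a set \<Rightarrow> ('a \<Rightarrow> 'a \<Rightarrow> bool) \<Rightarrow> bool" where
  "distance_hereditary V E \<longleftrightarrow>
     (\<forall>k\<ge>5. \<not> has_induced V E {0..<k} (cycle_adj k)) \<and>
     \<not> has_induced V E {0..<5} house_adj \<and>
     \<not> has_induced V E {0..<6} domino_adj \<and>
     \<not> has_induced V E {0..<5} gem_adj"

definition DH_coDH :: "'a set \<Rightarrow> ('a \<Rightarrow> 'a \<Rightarrow> bool) \<Rightarrow> bool" where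
  "DH_coDH V E \<longleftrightarrow> distance_hereditary V E \<and> distance_hereditary V (complement_graph E)"

definition twins :: "'a set \<Rightarrow> ('a \<Rightarrow> 'a \<Rightarrow> bool) \<Rightarrow> 'a \<Rightarrow> 'a \<Rightarrow> bool" where
  "twins V E u v \<longleftrightarrow> u \<in> V \<and> v \<in> V \<and> u \<noteq> v \<and>
     (\<forall>w\<in>V - {u, v}. E u w \<longleftrightarrow> E v w)"

inductive twin_elim :: "('a \<Rightarrow> 'a \<Rightarrow> bool) \<Rightarrow> 'a set \<Rightarrow> 'a set \<Rightarrow> bool" for E where
  refl: "twin_elim E V V"
| step: "twins V E u v \<Longrightarrow> twin_elim E (V - {v}) W \<Longrightarrow> twin_elim E V W"

end

theory Submission
  imports Defs
begin

text \<open>Deleting vertices keeps a graph in DH \<inter> co-DH, and adding a twin cannot create a hole,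
  house, domino or gem, since each of these is twin-free. The induced subgraphs of the bull lie in
  the class: every forbidden graph has at least five vertices and minimum degree two, while the
  bull and its complement have a vertex of degree one.

  Conversely, let \<open>G\<close> be a twin-free member of the class with at least two vertices. A component of
  \<open>G\<close> or of its complement with two vertices would, by induction, contain an induced \<open>P\<^sub>4\<close>, which
  together with an outside vertex forms a co-gem or a gem; so \<open>G\<close> and its complement are connected,
  and by Seinsche's theorem \<open>G\<close> contains an induced \<open>P\<^sub>4\<close> \<open>a b c d\<close>. Excluding the forbidden
  five-vertex graphs, every other vertex is adjacent to the path exactly like one of \<open>a, b, c, d\<close>,
  or exactly to \<open>b\<close> and \<open>c\<close>. The vertices imitating a path vertex form a module with it, those of
  the second kind form a module, and a module with two vertices in a twin-free graph again yields a
  co-gem. Hence \<open>G\<close> is the path plus at most one vertex adjacent to \<open>b\<close> and \<open>c\<close>.\<close>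

lemma all_less_5: "(\<forall>i<5::nat. P i) \<longleftrightarrow> P 0 \<and> P 1 \<and> P 2 \<and> P 3 \<and> P 4"
  by (auto simp: less_Suc_eq numeral_eq_Suc)

lemma all_less_4: "(\<forall>i<4::nat. P i) \<longleftrightarrow> P 0 \<and> P 1 \<and> P 2 \<and> P 3"
  by (auto simp: less_Suc_eq numeral_eq_Suc)

lemma atLeastLessThan_5: "{0..<5::nat} = {0, 1, 2, 3, 4}"
  by auto

lemma atLeastLessThan_6: "{0..<6::nat} = {0, 1, 2, 3, 4, 5}"
  by auto

lemma card_le_1_eq_singleton: "finite A \<Longrightarrow> card A \<le> 1 \<Longrightarrow> x \<in> A \<Longrightarrow> A = {x}"
  using card_le_Suc0_iff_eq[of A] by auto

section \<open>Isomorphisms and induced subgraphs\<close>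

lemma graph_iso_sym:
  assumes "graph_iso V E W F"
  shows "graph_iso W F V E"
proof -
  obtain f where f: "bij_betw f V W" "\<forall>x\<in>V. \<forall>y\<in>V. E x y \<longleftrightarrow> F (f x) (f y)"
    using assms unfolding graph_iso_def by blast
  let ?g = "inv_into V f"
  have g: "bij_betw ?g W V"
    using f(1) by (rule bij_betw_inv_into)
  have "F x y \<longleftrightarrow> E (?g x) (?g y)" if "x \<in> W" "y \<in> W" for x y
    using that f bij_betwE[OF g] bij_betw_inv_into_right[OF f(1)] by metis
  then show ?thesis
    using g unfolding graph_iso_def by blast
qed

lemma graph_iso_trans:
  assumes "graph_iso U D V E" "graph_iso V E W F"
  shows "graph_iso U D W F"
proof -
  obtain f where f: "bij_betw f U V" "\<forall>x\<in>U. \<forall>y\<in>U. D x y \<longleftrightarrow> E (f x) (f y)"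
    using assms(1) unfolding graph_iso_def by blast
  obtain g where g: "bij_betw g V W" "\<forall>x\<in>V. \<forall>y\<in>V. E x y \<longleftrightarrow> F (g x) (g y)"
    using assms(2) unfolding graph_iso_def by blast
  have "bij_betw (g \<circ> f) U W"
    using f(1) g(1) by (rule bij_betw_trans)
  moreover have "\<forall>x\<in>U. \<forall>y\<in>U. D x y \<longleftrightarrow> F ((g \<circ> f) x) ((g \<circ> f) y)"
    using f g bij_betwE[OF f(1)] by auto
  ultimately show ?thesis
    unfolding graph_iso_def by blast
qed

lemma graph_iso_card: "graph_iso V E W F \<Longrightarrow> card V = card W"
  unfolding graph_iso_def using bij_betw_same_card by blast

lemma graph_iso_finite: "graph_iso V E W F \<Longrightarrow> finite V \<longleftrightarrow> finite W"
  unfolding graph_iso_def using bij_betw_finite by blast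

lemma graph_iso_cong:
  assumes "\<forall>x\<in>V. \<forall>y\<in>V. R x y \<longleftrightarrow> R' x y"
  shows "graph_iso V R W F \<longleftrightarrow> graph_iso V R' W F"
  using assms unfolding graph_iso_def by auto

lemma graph_iso_nth:
  assumes "distinct vs"
  shows "graph_iso {0..<length vs} (\<lambda>i j. R (vs ! i) (vs ! j)) (set vs) R"
  unfolding graph_iso_def bij_betw_def using assms
  by (intro exI[of _ "nth vs"]) (auto simp: inj_on_def nth_eq_iff_index_eq set_conv_nth)

lemma graph_iso_lists:
  assumes "distinct vs" "distinct ws" "length vs = n" "length ws = n"
    and "\<forall>i<n. \<forall>j<n. E (vs ! i) (vs ! j) \<longleftrightarrow> F (ws ! i) (ws ! j)"
  shows "graph_iso (set vs) E (set ws) F"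
proof -
  have "graph_iso {0..<n} (\<lambda>i j. E (vs ! i) (vs ! j)) (set ws) F
    \<longleftrightarrow> graph_iso {0..<n} (\<lambda>i j. F (ws ! i) (ws ! j)) (set ws) F"
    using assms(5) by (intro graph_iso_cong) auto
  then have "graph_iso {0..<n} (\<lambda>i j. E (vs ! i) (vs ! j)) (set ws) F"
    using graph_iso_nth[OF assms(2)] assms(4) by simp
  moreover have "graph_iso (set vs) E {0..<n} (\<lambda>i j. E (vs ! i) (vs ! j))"
    using graph_iso_sym[OF graph_iso_nth[OF assms(1)]] assms(3) by simp
  ultimately show ?thesis
    using graph_iso_trans by metis
qed

lemma has_induced_by_list:
  assumes "set vs \<subseteq> V" "distinct vs" "length vs = n"
    and "\<forall>i<n. \<forall>j<n. R (vs ! i) (vs ! j) \<longleftrightarrow> F i j"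
  shows "has_induced V R {0..<n} F"
proof -
  have "graph_iso {0..<n} (\<lambda>i j. R (vs ! i) (vs ! j)) (set vs) R \<longleftrightarrow> graph_iso {0..<n} F (set vs) R"
    using assms(4) by (intro graph_iso_cong) auto
  then have "graph_iso {0..<n} F (set vs) R"
    using graph_iso_nth[OF assms(2)] assms(3) by simp
  then have "graph_iso (set vs) R {0..<n} F"
    by (rule graph_iso_sym)
  then show ?thesis
    unfolding has_induced_def using assms(1) by blast
qed

lemma has_induced_cong:
  assumes "\<forall>x\<in>V. \<forall>y\<in>V. R x y \<longleftrightarrow> R' x y"
  shows "has_induced V R H F \<longleftrightarrow> has_induced V R' H F"
proof -
  have "graph_iso S R H F \<longleftrightarrow> graph_iso S R' H F" if "S \<subseteq> V" for S
    using assms that by (intro graph_iso_cong) blast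
  then show ?thesis
    unfolding has_induced_def by blast
qed

definition dh_codh_graph :: "'a set \<Rightarrow> ('a \<Rightarrow> 'a \<Rightarrow> bool) \<Rightarrow> bool" where
  "dh_codh_graph V R \<longleftrightarrow> simple_graph V R \<and> DH_coDH V R"

lemma simple_graph_sym: "simple_graph V R \<Longrightarrow> x \<in> V \<Longrightarrow> y \<in> V \<Longrightarrow> R x y \<longleftrightarrow> R y x"
  unfolding simple_graph_def by blast

lemma simple_graph_irrefl: "simple_graph V R \<Longrightarrow> x \<in> V \<Longrightarrow> \<not> R x x"
  unfolding simple_graph_def by blast

lemma simple_graph_subset: "simple_graph V R \<Longrightarrow> W \<subseteq> V \<Longrightarrow> simple_graph W R"
  unfolding simple_graph_def by (auto intro: finite_subset)

lemma simple_graph_complement: "simple_graph V R \<Longrightarrow> simple_graph V (complement_graph R)"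
  unfolding simple_graph_def complement_graph_def by auto

lemma complement_graph_complement:
  "simple_graph V R \<Longrightarrow> \<forall>x\<in>V. \<forall>y\<in>V. complement_graph (complement_graph R) x y \<longleftrightarrow> R x y"
  unfolding simple_graph_def complement_graph_def by auto

lemma has_induced_subset: "has_induced W R H F \<Longrightarrow> W \<subseteq> V \<Longrightarrow> has_induced V R H F"
  unfolding has_induced_def by blast

lemma distance_hereditary_subset:
  "distance_hereditary V R \<Longrightarrow> W \<subseteq> V \<Longrightarrow> distance_hereditary W R"
  unfolding distance_hereditary_def using has_induced_subset by blast

lemma distance_hereditary_cong:
  "\<forall>x\<in>V. \<forall>y\<in>V. R x y \<longleftrightarrow> R' x y \<Longrightarrow> distance_hereditary V R \<longleftrightarrow> distance_hereditary V R'"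
  unfolding distance_hereditary_def by (simp only: has_induced_cong[of V R R'])

lemma dh_codh_graph_sym: "dh_codh_graph V R \<Longrightarrow> x \<in> V \<Longrightarrow> y \<in> V \<Longrightarrow> R x y \<longleftrightarrow> R y x"
  unfolding dh_codh_graph_def simple_graph_def by blast

lemma dh_codh_graph_irrefl: "dh_codh_graph V R \<Longrightarrow> x \<in> V \<Longrightarrow> \<not> R x x"
  unfolding dh_codh_graph_def simple_graph_def by blast

lemma dh_codh_graph_subset: "dh_codh_graph V R \<Longrightarrow> W \<subseteq> V \<Longrightarrow> dh_codh_graph W R"
  unfolding dh_codh_graph_def DH_coDH_def
  by (auto intro: simple_graph_subset distance_hereditary_subset)

lemma dh_codh_graph_complement: "dh_codh_graph V R \<Longrightarrow> dh_codh_graph V (complement_graph R)"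
  unfolding dh_codh_graph_def DH_coDH_def
  using simple_graph_complement distance_hereditary_cong[OF complement_graph_complement]
  by auto

section \<open>Twins and modules\<close>

definition twin_free :: "'a set \<Rightarrow> ('a \<Rightarrow> 'a \<Rightarrow> bool) \<Rightarrow> bool" where
  "twin_free V R \<longleftrightarrow> (\<forall>u v. \<not> twins V R u v)"

definition graph_module :: "'a set \<Rightarrow> ('a \<Rightarrow> 'a \<Rightarrow> bool) \<Rightarrow> 'a set \<Rightarrow> bool" where
  "graph_module V R M \<longleftrightarrow> M \<subseteq> V \<and> (\<forall>u\<in>M. \<forall>w\<in>M. \<forall>t\<in>V - M. R u t \<longleftrightarrow> R w t)"

lemma twins_complement: "twins V (complement_graph R) u v \<longleftrightarrow> twins V R u v"
  unfolding twins_def complement_graph_def by auto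

lemma twin_free_complement: "twin_free V (complement_graph R) \<longleftrightarrow> twin_free V R"
  unfolding twin_free_def by (simp add: twins_complement)

lemma graph_module_complement: "graph_module V (complement_graph R) M \<longleftrightarrow> graph_module V R M"
proof -
  have "complement_graph R u t \<longleftrightarrow> \<not> R u t" if "u \<in> M" "t \<notin> M" for u t
    using that unfolding complement_graph_def by auto
  then show ?thesis
    unfolding graph_module_def by simp
qed

lemma twins_in_module:
  assumes "graph_module V R M" "twins M R u v"
  shows "twins V R u v"
proof -
  have uv: "u \<in> M" "v \<in> M" "u \<noteq> v" and M: "M \<subseteq> V"
    using assms unfolding twins_def graph_module_def by simp_all
  have "R u w \<longleftrightarrow> R v w" if "w \<in> V - {u, v}" for w
  proof (cases "w \<in> M")
    case True
    then show ?thesis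
      using assms(2) that unfolding twins_def by blast
  next
    case False
    then show ?thesis
      using assms(1) uv that unfolding graph_module_def by blast
  qed
  then show ?thesis
    using uv M unfolding twins_def by auto
qed

lemma twin_free_module: "twin_free V R \<Longrightarrow> graph_module V R M \<Longrightarrow> twin_free M R"
  unfolding twin_free_def by (blast intro: twins_in_module)

section \<open>Vertices outside an induced \<open>P\<^sub>4\<close>\<close>

definition induced_P4 :: "'a set \<Rightarrow> ('a \<Rightarrow> 'a \<Rightarrow> bool) \<Rightarrow> 'a \<Rightarrow> 'a \<Rightarrow> 'a \<Rightarrow> 'a \<Rightarrow> bool" where
  "induced_P4 V R a b c d \<longleftrightarrow> {a, b, c, d} \<subseteq> V \<and> distinct [a, b, c, d] \<and>
     R a b \<and> R b c \<and> R c d \<and> \<not> R a c \<and> \<not> R a d \<and> \<not> R b d"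

text \<open>The first four alternatives say that \<open>x\<close> is adjacent to the same vertices among
  \<open>{b,c,d}\<close>, \<open>{a,c,d}\<close>, \<open>{a,b,d}\<close>, \<open>{a,b,c}\<close> as \<open>a\<close>, \<open>b\<close>, \<open>c\<close>, \<open>d\<close> respectively; in the last one
  \<open>x\<close> is adjacent exactly to the two inner vertices.\<close>
definition P4_compatible :: "('a \<Rightarrow> 'a \<Rightarrow> bool) \<Rightarrow> 'a \<Rightarrow> 'a \<Rightarrow> 'a \<Rightarrow> 'a \<Rightarrow> 'a \<Rightarrow> bool" where
  "P4_compatible R a b c d x \<longleftrightarrow>
     (R x b \<and> \<not> R x c \<and> \<not> R x d) \<or> (R x a \<and> R x c \<and> \<not> R x d) \<or>
     (\<not> R x a \<and> R x b \<and> R x d) \<or> (\<not> R x a \<and> \<not> R x b \<and> R x c) \<or>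
     (\<not> R x a \<and> R x b \<and> R x c \<and> \<not> R x d)"

lemma dh_codh_graph_no_induced_5:
  assumes "dh_codh_graph V R"
  shows "\<not> has_induced V R {0..<5} (cycle_adj 5)" "\<not> has_induced V R {0..<5} house_adj"
    "\<not> has_induced V R {0..<5} gem_adj"
    "\<not> has_induced V (complement_graph R) {0..<5} house_adj"
    "\<not> has_induced V (complement_graph R) {0..<5} gem_adj"
  using assms unfolding dh_codh_graph_def DH_coDH_def distance_hereditary_def by auto

lemma induced_P4_compatible:
  assumes G: "dh_codh_graph V R" and P: "induced_P4 V R a b c d" and x: "x \<in> V - {a, b, c, d}"
  shows "P4_compatible R a b c d x"
proof (rule ccontr)
  assume "\<not> P4_compatible R a b c d x"
  note no_induced = dh_codh_graph_no_induced_5[OF G]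
  note facts = P[unfolded induced_P4_def] x dh_codh_graph_sym[OF G] dh_codh_graph_irrefl[OF G]
  from \<open>\<not> P4_compatible R a b c d x\<close> consider
      (none) "\<not> R x a" "\<not> R x b" "\<not> R x c" "\<not> R x d"
    | (a) "R x a" "\<not> R x b" "\<not> R x c" "\<not> R x d"
    | (d) "\<not> R x a" "\<not> R x b" "\<not> R x c" "R x d"
    | (ad) "R x a" "\<not> R x b" "\<not> R x c" "R x d"
    | (abd) "R x a" "R x b" "\<not> R x c" "R x d"
    | (acd) "R x a" "\<not> R x b" "R x c" "R x d"
    | (abcd) "R x a" "R x b" "R x c" "R x d"
    unfolding P4_compatible_def by blast
  then show False
  proof cases
    case none
    have "has_induced V (complement_graph R) {0..<5} gem_adj"
      by (rule has_induced_by_list[of "[b, d, a, c, x]"])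
        (use none facts in \<open>auto simp: all_less_5 gem_adj_def doubleton_eq_iff complement_graph_def\<close>)
    then show False
      using no_induced by blast
  next
    case a
    have "has_induced V (complement_graph R) {0..<5} house_adj"
      by (rule has_induced_by_list[of "[d, b, x, c, a]"])
        (use a facts in \<open>auto simp: all_less_5 house_adj_def cycle_adj_def doubleton_eq_iff complement_graph_def\<close>)
    then show False
      using no_induced by blast
  next
    case d
    have "has_induced V (complement_graph R) {0..<5} house_adj"
      by (rule has_induced_by_list[of "[a, c, x, b, d]"])
        (use d facts in \<open>auto simp: all_less_5 house_adj_def cycle_adj_def doubleton_eq_iff complement_graph_def\<close>)
    then show False
      using no_induced by blast
  next
    case ad
    have "has_induced V R {0..<5} (cycle_adj 5)"
      by (rule has_induced_by_list[of "[a, b, c, d, x]"])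
        (use ad facts in \<open>auto simp: all_less_5 cycle_adj_def\<close>)
    then show False
      using no_induced by blast
  next
    case abd
    have "has_induced V R {0..<5} house_adj"
      by (rule has_induced_by_list[of "[b, a, x, d, c]"])
        (use abd facts in \<open>auto simp: all_less_5 house_adj_def cycle_adj_def doubleton_eq_iff\<close>)
    then show False
      using no_induced by blast
  next
    case acd
    have "has_induced V R {0..<5} house_adj"
      by (rule has_induced_by_list[of "[c, d, x, a, b]"])
        (use acd facts in \<open>auto simp: all_less_5 house_adj_def cycle_adj_def doubleton_eq_iff\<close>)
    then show False
      using no_induced by blast
  next
    case abcd
    have "has_induced V R {0..<5} gem_adj"
      by (rule has_induced_by_list[of "[a, b, c, d, x]"])
        (use abcd facts in \<open>auto simp: all_less_5 gem_adj_def doubleton_eq_iff\<close>)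
    then show False
      using no_induced by blast
  qed
qed

lemma induced_P4_dominating:
  assumes "dh_codh_graph V R" "induced_P4 V R a b c d" "x \<in> V - {a, b, c, d}"
  shows "R x a \<or> R x b \<or> R x c \<or> R x d"
  using induced_P4_compatible[OF assms] unfolding P4_compatible_def by blast

lemma induced_P4_rev:
  assumes "dh_codh_graph V R" "induced_P4 V R a b c d"
  shows "induced_P4 V R d c b a"
  using assms(2) dh_codh_graph_sym[OF assms(1)] unfolding induced_P4_def by (auto simp: insert_commute)

lemma induced_P4_complement:
  assumes "dh_codh_graph V R" "induced_P4 V R a b c d"
  shows "induced_P4 V (complement_graph R) c a d b"
  using assms(2) dh_codh_graph_sym[OF assms(1)]
  unfolding induced_P4_def complement_graph_def by (auto simp: insert_commute)

text \<open>If \<open>t\<close> is adjacent to \<open>c\<close> but not to \<open>d\<close>, and to one end, say \<open>a\<close>, then \<open>a t c d\<close> is an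
  induced \<open>P\<^sub>4\<close> and compatibility of \<open>x\<close> with it forces \<open>x\<close> to be adjacent to \<open>t\<close>. Otherwise
  compatibility with the two given paths rules out adjacency of \<open>t\<close> to either end.\<close>
lemma induced_P4_ends_agree:
  assumes G: "dh_codh_graph V R" and P: "induced_P4 V R a b c d" "induced_P4 V R x b c d"
    and t: "t \<in> V - {a, b, c, d, x}" "\<not> (R t b \<and> \<not> R t c \<and> \<not> R t d)" and "a \<noteq> x"
  shows "R t a \<longleftrightarrow> R t x"
proof -
  note sym = dh_codh_graph_sym[OF G]
  have adjacent_other_end: "R t y'"
    if "induced_P4 V R y b c d" "induced_P4 V R y' b c d" "y \<noteq> y'" "t \<notin> {y, y'}"
      "R t y" "R t c" "\<not> R t d" "t \<in> V - {b, c, d}"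
    for y y'
  proof -
    have "induced_P4 V R y t c d"
      using that sym unfolding induced_P4_def by auto
    then have "P4_compatible R y t c d y'"
      using that by (intro induced_P4_compatible[OF G]) (auto simp: induced_P4_def)
    then show "R t y'"
      using that sym unfolding P4_compatible_def induced_P4_def by auto
  qed
  show ?thesis
  proof (cases "R t c \<and> \<not> R t d")
    case True
    then show ?thesis
      using adjacent_other_end[OF P(1,2)] adjacent_other_end[OF P(2,1)] t \<open>a \<noteq> x\<close> by auto
  next
    case False
    then show ?thesis
      using induced_P4_compatible[OF G P(1), of t] induced_P4_compatible[OF G P(2), of t] t
      unfolding P4_compatible_def by auto
  qed
qed

definition replacement_set :: "'a set \<Rightarrow> ('a \<Rightarrow> 'a \<Rightarrow> bool) \<Rightarrow> 'a set \<Rightarrow> 'a \<Rightarrow> 'a set" where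
  "replacement_set V R P p = {x \<in> V - (P - {p}). \<forall>s\<in>P - {p}. R x s \<longleftrightarrow> R p s}"

lemma replacement_set_complement:
  "p \<in> P \<Longrightarrow> replacement_set V (complement_graph R) P p = replacement_set V R P p"
  unfolding replacement_set_def complement_graph_def by auto

lemma replacement_set_P4:
  assumes G: "dh_codh_graph V R" and P: "induced_P4 V R a b c d"
  shows "replacement_set V R {a, b, c, d} a = {x \<in> V - {b, c, d}. R x b \<and> \<not> R x c \<and> \<not> R x d}"
      (is ?thesis1)
    and "replacement_set V R {a, b, c, d} b = {x \<in> V - {a, c, d}. R x a \<and> R x c \<and> \<not> R x d}"
      (is ?thesis2)
    and "replacement_set V R {a, b, c, d} c = {x \<in> V - {a, b, d}. \<not> R x a \<and> R x b \<and> R x d}"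
      (is ?thesis3)
    and "replacement_set V R {a, b, c, d} d = {x \<in> V - {a, b, c}. \<not> R x a \<and> \<not> R x b \<and> R x c}"
      (is ?thesis4)
proof -
  have "R b a" "R c b" "R d c" "\<not> R c a" "\<not> R d a" "\<not> R d b"
    using P dh_codh_graph_sym[OF G] unfolding induced_P4_def by auto
  with P show ?thesis1 ?thesis2 ?thesis3 ?thesis4
    unfolding replacement_set_def induced_P4_def by auto
qed

lemma replacement_set_first_module:
  assumes G: "dh_codh_graph V R" and P: "induced_P4 V R a b c d"
  shows "graph_module V R (replacement_set V R {a, b, c, d} a)" (is "graph_module V R ?M")
proof -
  note sym = dh_codh_graph_sym[OF G]
  note M = replacement_set_P4(1)[OF G P]
  have like_a: "R x t \<longleftrightarrow> R a t" if x: "x \<in> ?M" and t: "t \<in> V - ?M" for x t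
  proof (cases "x = a \<or> t \<in> {b, c, d}")
    case True
    moreover have "R x b" "\<not> R x c" "\<not> R x d"
      using x unfolding M by auto
    ultimately show ?thesis
      using P unfolding induced_P4_def by auto
  next
    case False
    have "a \<in> ?M"
      using P unfolding M induced_P4_def by auto
    then have "induced_P4 V R x b c d" "t \<in> V - {a, b, c, d, x}"
      using x t False P sym unfolding M induced_P4_def by auto
    moreover have "\<not> (R t b \<and> \<not> R t c \<and> \<not> R t d)"
      using t False sym unfolding M by auto
    ultimately have "R t a \<longleftrightarrow> R t x"
      using induced_P4_ends_agree[OF G P] False by blast
    then show ?thesis
      using x t P sym unfolding M induced_P4_def by auto
  qed
  have "R u t \<longleftrightarrow> R w t" if "u \<in> ?M" "w \<in> ?M" "t \<in> V - ?M" for u w t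
    using like_a[OF that(1,3)] like_a[OF that(2,3)] by simp
  moreover have "?M \<subseteq> V"
    unfolding M by blast
  ultimately show ?thesis
    unfolding graph_module_def by blast
qed

text \<open>Reversal, and complementation (which turns the path \<open>a b c d\<close> into \<open>c a d b\<close>), move the
  first vertex of the path to each of the four positions.\<close>
lemma replacement_set_module:
  assumes G: "dh_codh_graph V R" and P: "induced_P4 V R a b c d" and p: "p \<in> {a, b, c, d}"
  shows "graph_module V R (replacement_set V R {a, b, c, d} p)"
proof -
  have G': "dh_codh_graph V (complement_graph R)"
    using G by (rule dh_codh_graph_complement)
  have first: "graph_module V S (replacement_set V S {a, b, c, d} q)"
    if "dh_codh_graph V S" "induced_P4 V S q q' q'' q'''" "{q, q', q'', q'''} = {a, b, c, d}"
    for S q q' q'' q'''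
    using replacement_set_first_module[OF that(1,2)] that(3) by simp
  have complement_module: "graph_module V R (replacement_set V R {a, b, c, d} p)"
    if "graph_module V (complement_graph R) (replacement_set V (complement_graph R) {a, b, c, d} p)"
    using that p by (simp add: replacement_set_complement graph_module_complement)
  from p consider "p = a" | "p = b" | "p = c" | "p = d"
    by blast
  then show ?thesis
  proof cases
    case 1
    then show ?thesis
      using first[OF G P] by simp
  next
    case 2
    have "induced_P4 V (complement_graph R) b d a c"
      using induced_P4_rev[OF G' induced_P4_complement[OF G P]] .
    then show ?thesis
      using first[OF G'] 2 complement_module by auto
  next
    case 3
    then show ?thesis
      using first[OF G' induced_P4_complement[OF G P]] complement_module by auto
  next
    case 4
    then show ?thesis
      using first[OF G induced_P4_rev[OF G P]] by auto
  qed
qed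

section \<open>Connectivity and Seinsche's theorem\<close>

definition reach :: "'a set \<Rightarrow> ('a \<Rightarrow> 'a \<Rightarrow> bool) \<Rightarrow> 'a \<Rightarrow> 'a \<Rightarrow> bool" where
  "reach V R = (\<lambda>a b. a \<in> V \<and> b \<in> V \<and> R a b)\<^sup>*\<^sup>*"

lemma connected_graph_reach: "connected_graph V R \<longleftrightarrow> V \<noteq> {} \<and> (\<forall>x\<in>V. \<forall>y\<in>V. reach V R x y)"
  unfolding connected_graph_def reach_def ..

lemma reach_refl: "reach V R x x"
  unfolding reach_def by simp

lemma reach_edge: "x \<in> V \<Longrightarrow> y \<in> V \<Longrightarrow> R x y \<Longrightarrow> reach V R x y"
  unfolding reach_def by (rule r_into_rtranclp) simp

lemma reach_trans: "reach V R x y \<Longrightarrow> reach V R y z \<Longrightarrow> reach V R x z"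
  unfolding reach_def by (rule rtranclp_trans)

lemma reach_sym:
  assumes "simple_graph V R" "reach V R x y"
  shows "reach V R y x"
  using assms(2) unfolding reach_def
proof (induction rule: rtranclp_induct)
  case (step y z)
  then have "(\<lambda>a b. a \<in> V \<and> b \<in> V \<and> R a b) z y"
    using simple_graph_sym[OF assms(1)] by auto
  then show ?case
    using step(3) by (rule converse_rtranclp_into_rtranclp)
qed simp

lemma connected_graph_neighbour:
  assumes "connected_graph V R" "v \<in> V" "w \<in> V" "v \<noteq> w"
  shows "\<exists>t\<in>V. R v t"
proof -
  have "(\<lambda>a b. a \<in> V \<and> b \<in> V \<and> R a b)\<^sup>*\<^sup>* v w"
    using assms unfolding connected_graph_def by blast
  then show ?thesis
    using assms(4) by (cases rule: converse_rtranclpE) auto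
qed

lemma reach_removed_vertex:
  assumes "reach V R u v" "u \<in> V - {v}"
  shows "\<exists>n\<in>V - {v}. R n v \<and> reach (V - {v}) R u n"
proof -
  have "\<exists>n\<in>V - {v}. R n v \<and> reach (V - {v}) R u n" if "reach V R u t" "t = v" "u \<in> V - {v}" for t
    using that unfolding reach_def
  proof (induction rule: converse_rtranclp_induct)
    case (step u u')
    show ?case
    proof (cases "u' = v")
      case True
      then show ?thesis
        using step by auto
    next
      case False
      then obtain n where n: "n \<in> V - {v}" "R n v"
        "(\<lambda>a b. a \<in> V - {v} \<and> b \<in> V - {v} \<and> R a b)\<^sup>*\<^sup>* u' n"
        using step by blast
      have "(\<lambda>a b. a \<in> V - {v} \<and> b \<in> V - {v} \<and> R a b) u u'"
        using step(1,5) False by auto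
      then have "(\<lambda>a b. a \<in> V - {v} \<and> b \<in> V - {v} \<and> R a b)\<^sup>*\<^sup>* u n"
        using n(3) by (rule converse_rtranclp_into_rtranclp)
      then show ?thesis
        using n(1,2) by blast
    qed
  qed simp
  then show ?thesis
    using assms by blast
qed

lemma reach_crossing_edge:
  assumes "reach W R p q" "P p" "\<not> P q"
  shows "\<exists>s t. s \<in> W \<and> t \<in> W \<and> R s t \<and> P s \<and> \<not> P t \<and> reach W R p s"
  using assms unfolding reach_def
proof (induction rule: rtranclp_induct)
  case (step y z)
  then show ?case
    by (cases "P y") blast+
qed simp

text \<open>Walking inside the component of \<open>w\<close> in \<open>V - {v}\<close> from a neighbour of \<open>v\<close> to the
  non-neighbour \<open>w\<close>, some edge \<open>s t\<close> leaves the neighbourhood of \<open>v\<close>; for a neighbour \<open>n\<close> of \<open>v\<close>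
  in another component, \<open>t s v n\<close> is an induced \<open>P\<^sub>4\<close>.\<close>
lemma induced_P4_if_removal_disconnects:
  assumes S: "simple_graph V R" and conn: "connected_graph V R" and v: "v \<in> V"
    and w: "w \<in> V" "w \<noteq> v" "\<not> R v w"
    and xy: "x \<in> V - {v}" "y \<in> V - {v}" "\<not> reach (V - {v}) R x y"
  shows "\<exists>a b c d. induced_P4 V R a b c d"
proof -
  let ?W = "V - {v}"
  have S': "simple_graph ?W R"
    using S by (rule simple_graph_subset) blast
  note sym = simple_graph_sym[OF S] and irr = simple_graph_irrefl[OF S]
  obtain y' where y': "y' \<in> ?W" "\<not> reach ?W R w y'"
    using xy w reach_sym[OF S'] reach_trans by metis
  have "reach V R w v" "reach V R y' v"
    using conn w v y' unfolding connected_graph_reach by auto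
  then obtain n1 n2 where n1: "n1 \<in> ?W" "R n1 v" "reach ?W R w n1"
    and n2: "n2 \<in> ?W" "R n2 v" "reach ?W R y' n2"
    using reach_removed_vertex w y' by (metis Diff_iff singletonD)
  have no_path: "\<not> reach ?W R w n2"
    using n2 y' reach_sym[OF S'] reach_trans by metis
  have "reach ?W R n1 w"
    using n1 reach_sym[OF S'] by blast
  then obtain s t where st: "s \<in> ?W" "t \<in> ?W" "R s t" "R v s" "\<not> R v t" "reach ?W R n1 s"
    using reach_crossing_edge[of ?W R n1 w "R v"] n1 sym w v by auto
  have rs: "reach ?W R w s" and rt: "reach ?W R w t"
    using n1 st reach_trans reach_edge by metis+
  have "\<not> R s n2" "\<not> R t n2" "s \<noteq> n2" "t \<noteq> n2"
    using rs rt no_path reach_trans reach_edge st(1,2) n2(1) by metis+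
  then have "induced_P4 V R t s v n2"
    unfolding induced_P4_def using st n2 v sym irr by auto
  then show ?thesis
    by blast
qed

lemma induced_P4_if_connected_complement_connected:
  "finite V \<Longrightarrow> 2 \<le> card V \<Longrightarrow> simple_graph V R \<Longrightarrow> connected_graph V R \<Longrightarrow>
    connected_graph V (complement_graph R) \<Longrightarrow> \<exists>a b c d. induced_P4 V R a b c d"
proof (induction "card V" arbitrary: V R rule: less_induct)
  case less
  note S = \<open>simple_graph V R\<close>
  obtain v w where v: "v \<in> V" and w: "w \<in> V" "w \<noteq> v"
    using less.prems(1,2) by (metis card_le_Suc0_iff_eq not_less_eq_eq numeral_2_eq_2)
  obtain t where t: "t \<in> V" "R v t"
    using connected_graph_neighbour[OF less.prems(4) v w(1)] w(2) by metis
  obtain t' where t': "t' \<in> V" "t' \<noteq> v" "\<not> R v t'"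
    using connected_graph_neighbour[OF less.prems(5) v w(1)] w(2) unfolding complement_graph_def by metis
  have "t \<noteq> v" "t \<noteq> t'"
    using t t' simple_graph_irrefl[OF S v] by blast+
  have "{v, t, t'} \<subseteq> V" "card {v, t, t'} = 3"
    using v t t' \<open>t \<noteq> v\<close> \<open>t \<noteq> t'\<close> by auto
  then have "3 \<le> card V"
    using card_mono[OF less.prems(1)] by metis
  then have W: "card (V - {v}) < card V" "2 \<le> card (V - {v})" "finite (V - {v})"
    using less.prems(1) v by (auto simp: card_Diff_singleton)
  have S': "simple_graph (V - {v}) R"
    using S by (rule simple_graph_subset) blast
  consider (both) "connected_graph (V - {v}) R" "connected_graph (V - {v}) (complement_graph R)"
    | (graph) x y where "x \<in> V - {v}" "y \<in> V - {v}" "\<not> reach (V - {v}) R x y"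
    | (complement) x y where "x \<in> V - {v}" "y \<in> V - {v}" "\<not> reach (V - {v}) (complement_graph R) x y"
    unfolding connected_graph_reach using W(2) by fastforce
  then show ?case
  proof cases
    case both
    then obtain a b c d where "induced_P4 (V - {v}) R a b c d"
      using less.hyps[OF W(1) W(3) W(2) S'] by blast
    then have "induced_P4 V R a b c d"
      unfolding induced_P4_def by blast
    then show ?thesis
      by blast
  next
    case graph
    then show ?thesis
      using induced_P4_if_removal_disconnects[OF S less.prems(4) v t'] by blast
  next
    case complement
    have "\<not> complement_graph R v t"
      using t unfolding complement_graph_def by blast
    then obtain a b c d where "induced_P4 V (complement_graph R) a b c d"
      using induced_P4_if_removal_disconnects[OF simple_graph_complement[OF S] less.prems(5) v]
        complement t(1) \<open>t \<noteq> v\<close> by blast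
    then have "induced_P4 V R c a d b"
      using S unfolding induced_P4_def simple_graph_def complement_graph_def by auto
    then show ?thesis
      by blast
  qed
qed

section \<open>Twin-free graphs in DH \<inter> co-DH\<close>

lemma induced_P4_subset: "induced_P4 W R a b c d \<Longrightarrow> W \<subseteq> V \<Longrightarrow> induced_P4 V R a b c d"
  unfolding induced_P4_def by blast

lemma induced_P4_neighbour:
  assumes G: "dh_codh_graph V R" and P: "induced_P4 C R a b c d" and C: "C \<subseteq> V" and y: "y \<in> V - C"
  shows "\<exists>u\<in>C. R u y"
proof -
  have "induced_P4 V R a b c d" "{a, b, c, d} \<subseteq> C"
    using induced_P4_subset[OF P C] P unfolding induced_P4_def by auto
  then show ?thesis
    using induced_P4_dominating[OF G, of a b c d y] y dh_codh_graph_sym[OF G] C by blast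
qed

lemma reach_component_no_edge_out:
  assumes "u \<in> V" "reach V R x u" "t \<in> V" "\<not> reach V R x t"
  shows "\<not> R u t"
  using assms reach_trans[of V R x u t] reach_edge[of u V t R] by blast

lemma twin_free_disconnected:
  assumes S: "simple_graph V R" and tf: "twin_free V R" and V: "V \<noteq> {}"
    and disconnected: "\<not> connected_graph V R"
  obtains x y t where "x \<in> V" "y \<in> V" "\<not> reach V R x y" "t \<in> V" "R x t"
proof -
  obtain x y where xy: "x \<in> V" "y \<in> V" "\<not> reach V R x y"
    using V disconnected unfolding connected_graph_reach by blast
  have "x \<noteq> y"
    using xy(3) reach_refl by metis
  then have "\<not> twins V R x y"
    using tf unfolding twin_free_def by blast
  then have "(\<exists>t\<in>V. R x t) \<or> (\<exists>t\<in>V. R y t)"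
    using xy \<open>x \<noteq> y\<close> unfolding twins_def by blast
  then show thesis
  proof
    assume "\<exists>t\<in>V. R x t"
    then show thesis
      using that[OF xy] by (elim bexE)
  next
    assume "\<exists>t\<in>V. R y t"
    moreover have "\<not> reach V R y x"
      using xy(3) reach_sym[OF S] by blast
    ultimately show thesis
      using that[OF xy(2,1)] by (elim bexE)
  qed
qed

lemma twin_free_disconnected_component:
  assumes S: "simple_graph V R" and tf: "twin_free V R" and V: "V \<noteq> {}"
    and disconnected: "\<not> connected_graph V R"
  shows "\<exists>C y. C \<subseteq> V \<and> y \<in> V - C \<and> 2 \<le> card C \<and> twin_free C R \<and> (\<forall>u\<in>C. \<not> R u y)"
proof -
  obtain x y t where xy: "x \<in> V" "y \<in> V" "\<not> reach V R x y" and t: "t \<in> V" "R x t"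
    using twin_free_disconnected[OF assms] by blast
  define C where "C = {s \<in> V. reach V R x s}"
  have no_edge_out: "\<not> R u s" if "u \<in> C" "s \<in> V - C" for u s
    using that reach_component_no_edge_out[of u V R x s] unfolding C_def by blast
  then have "graph_module V R C"
    unfolding graph_module_def C_def by blast
  have "{x, t} \<subseteq> C" "x \<noteq> t" "finite C"
    using xy(1) t reach_refl[of V R x] reach_edge[of x V t R] simple_graph_irrefl[OF S] S
    unfolding C_def simple_graph_def by auto
  then have "2 \<le> card C"
    by (metis card_2_iff card_mono)
  moreover have "twin_free C R"
    using tf \<open>graph_module V R C\<close> by (rule twin_free_module)
  moreover have "y \<in> V - C" "C \<subseteq> V"
    using xy unfolding C_def by auto
  ultimately show ?thesis
    using no_edge_out by blast
qed

lemma twin_free_dh_codh_graph_has_P4: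
  "dh_codh_graph V R \<Longrightarrow> twin_free V R \<Longrightarrow> 2 \<le> card V \<Longrightarrow> \<exists>a b c d. induced_P4 V R a b c d"
proof (induction "card V" arbitrary: V R rule: less_induct)
  case less
  have fin: "finite V" and V: "V \<noteq> {}"
    using less.prems(3) by (auto intro: card_ge_0_finite)
  have "connected_graph V S" if S: "S \<in> {R, complement_graph R}" for S
  proof (rule ccontr)
    assume "\<not> connected_graph V S"
    moreover have G: "dh_codh_graph V S" and "twin_free V S"
      using S less.prems dh_codh_graph_complement twin_free_complement by auto
    ultimately obtain C y where C: "C \<subseteq> V" "y \<in> V - C" "2 \<le> card C" "twin_free C S"
      and no_nbr: "\<forall>u\<in>C. \<not> S u y"
      using twin_free_disconnected_component V unfolding dh_codh_graph_def by metis
    have "C \<subset> V"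
      using C by blast
    then have "card C < card V"
      by (rule psubset_card_mono[OF fin])
    then obtain a b c d where "induced_P4 C S a b c d"
      using less.hyps C dh_codh_graph_subset[OF G C(1)] by blast
    then show False
      using induced_P4_neighbour[OF G _ C(1,2)] no_nbr by blast
  qed
  then show ?case
    using induced_P4_if_connected_complement_connected[OF fin less.prems(3)] less.prems(1)
    unfolding dh_codh_graph_def by simp
qed

lemma module_card_le_1:
  assumes G: "dh_codh_graph V R" and tf: "twin_free V R" and M: "graph_module V R M"
    and q: "q \<in> V - M" "\<forall>u\<in>M. \<not> R u q"
  shows "card M \<le> 1"
proof (rule ccontr)
  assume "\<not> card M \<le> 1"
  moreover have "M \<subseteq> V"
    using M unfolding graph_module_def by blast
  ultimately obtain a b c d where "induced_P4 M R a b c d"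
    using twin_free_dh_codh_graph_has_P4[OF dh_codh_graph_subset[OF G] twin_free_module[OF tf M]]
    by fastforce
  then show False
    using induced_P4_neighbour[OF G _ \<open>M \<subseteq> V\<close> q(1)] q(2) by blast
qed

lemma twin_free_replacement_set:
  assumes G: "dh_codh_graph V R" and tf: "twin_free V R" and P: "induced_P4 V R a b c d"
    and p: "p \<in> {a, b, c, d}"
  shows "replacement_set V R {a, b, c, d} p = {p}" (is "?M = _")
proof -
  obtain q where q: "q \<in> {a, b, c, d} - {p}" "\<not> R p q"
    using p P dh_codh_graph_sym[OF G] unfolding induced_P4_def by auto
  have "{a, b, c, d} \<subseteq> V" "finite V"
    using P G unfolding induced_P4_def dh_codh_graph_def simple_graph_def by simp_all
  then have M: "p \<in> ?M" "?M \<subseteq> V" "q \<in> V - ?M" "\<forall>u\<in>?M. \<not> R u q"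
    using p q unfolding replacement_set_def by auto
  then have "card ?M \<le> 1"
    using module_card_le_1[OF G tf replacement_set_module[OF G P p]] by blast
  moreover have "finite ?M"
    using finite_subset[OF M(2) \<open>finite V\<close>] .
  ultimately show ?thesis
    using card_le_1_eq_singleton M(1) by metis
qed

lemma twin_free_outside_P4:
  assumes G: "dh_codh_graph V R" and tf: "twin_free V R" and P: "induced_P4 V R a b c d"
    and z: "z \<in> V - {a, b, c, d}"
  shows "\<not> R z a \<and> R z b \<and> R z c \<and> \<not> R z d"
proof -
  have out: "z \<notin> replacement_set V R {a, b, c, d} p" if "p \<in> {a, b, c, d}" for p
    using twin_free_replacement_set[OF G tf P that] z that by blast
  have "\<not> (R z b \<and> \<not> R z c \<and> \<not> R z d)" "\<not> (R z a \<and> R z c \<and> \<not> R z d)"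
    "\<not> (\<not> R z a \<and> R z b \<and> R z d)" "\<not> (\<not> R z a \<and> \<not> R z b \<and> R z c)"
    using out[of a] out[of b] out[of c] out[of d] z unfolding replacement_set_P4[OF G P] by auto
  then show ?thesis
    using induced_P4_compatible[OF G P z] unfolding P4_compatible_def by blast
qed

lemma twin_free_dh_codh_graph_cases:
  assumes G: "dh_codh_graph V R" and tf: "twin_free V R" and two: "2 \<le> card V"
  obtains a b c d where "induced_P4 V R a b c d" "V = {a, b, c, d}"
  | a b c d z where "induced_P4 V R a b c d" "z \<notin> {a, b, c, d}"
      "\<not> R z a" "R z b" "R z c" "\<not> R z d" "V = {a, b, c, d, z}"
proof -
  obtain a b c d where P: "induced_P4 V R a b c d"
    using twin_free_dh_codh_graph_has_P4[OF G tf two] by blast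
  let ?P = "{a, b, c, d}"
  note Z = twin_free_outside_P4[OF G tf P]
  have fin: "finite V" and PV: "?P \<subseteq> V"
    using two P unfolding induced_P4_def by (auto intro: card_ge_0_finite)
  have card: "card (V - ?P) \<le> 1"
  proof (rule module_card_le_1[OF G tf])
    show "graph_module V R (V - ?P)"
      using Z dh_codh_graph_sym[OF G] PV unfolding graph_module_def by auto
    show "a \<in> V - (V - ?P)" "\<forall>u\<in>V - ?P. \<not> R u a"
      using PV Z by auto
  qed
  show thesis
  proof (cases "V - ?P = {}")
    case True
    then have "V = ?P"
      using PV by blast
    then show thesis
      using that(1)[OF P] by blast
  next
    case False
    then obtain z where z: "z \<in> V - ?P"
      by blast
    then have "V - ?P = {z}"
      using card_le_1_eq_singleton[OF _ card] fin by blast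
    then have "V = {a, b, c, d, z}"
      using PV by auto
    then show thesis
      using that(2)[OF P] Z[OF z] z by blast
  qed
qed

lemma simple_graph_card_le_1_bull:
  assumes S: "simple_graph V R" and card: "card V \<le> 1"
  shows "\<exists>S\<subseteq>{0..<5::nat}. graph_iso V R S bull_adj"
proof (cases "V = {}")
  case True
  then show ?thesis
    unfolding graph_iso_def by (intro exI[of _ "{}"]) (auto simp: bij_betw_def)
next
  case False
  then obtain x where x: "x \<in> V"
    by blast
  have "finite V"
    using S unfolding simple_graph_def by blast
  then have "V = {x}"
    using card x by (rule card_le_1_eq_singleton)
  moreover have "graph_iso {x} R {0} bull_adj"
    unfolding graph_iso_def using simple_graph_irrefl[OF S x]
    by (intro exI[of _ "\<lambda>_. 0"]) (auto simp: bull_adj_def)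
  ultimately show ?thesis
    by (intro exI[of _ "{0}"]) auto
qed

lemma twin_free_dh_codh_graph_bull:
  assumes G: "dh_codh_graph V R" and tf: "twin_free V R"
  shows "\<exists>S\<subseteq>{0..<5::nat}. graph_iso V R S bull_adj"
proof (cases "2 \<le> card V")
  case True
  note sym = dh_codh_graph_sym[OF G] and irr = dh_codh_graph_irrefl[OF G]
  show ?thesis
    using G tf True
  proof (cases rule: twin_free_dh_codh_graph_cases)
    case (1 a b c d)
    have "\<forall>i<4. \<forall>j<4. R ([a, b, c, d] ! i) ([a, b, c, d] ! j) \<longleftrightarrow>
        bull_adj ([3, 0, 1, 4] ! i) ([3, 0, 1, 4] ! j)"
      using 1 sym irr unfolding induced_P4_def all_less_4 by (auto simp: bull_adj_def doubleton_eq_iff)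
    then have "graph_iso (set [a, b, c, d]) R (set [3, 0, 1, 4]) bull_adj"
      using 1 unfolding induced_P4_def by (intro graph_iso_lists) auto
    then show ?thesis
      using 1 by (intro exI[of _ "{3, 0, 1, 4}"]) auto
  next
    case (2 a b c d z)
    have "\<forall>i<5. \<forall>j<5. R ([a, b, c, d, z] ! i) ([a, b, c, d, z] ! j) \<longleftrightarrow>
        bull_adj ([3, 0, 1, 4, 2] ! i) ([3, 0, 1, 4, 2] ! j)"
      using 2 sym irr unfolding induced_P4_def all_less_5 by (auto simp: bull_adj_def doubleton_eq_iff)
    then have "graph_iso (set [a, b, c, d, z]) R (set [3, 0, 1, 4, 2]) bull_adj"
      using 2 unfolding induced_P4_def by (intro graph_iso_lists) auto
    then show ?thesis
      using 2 by (intro exI[of _ "{3, 0, 1, 4, 2}"]) auto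
  qed
next
  case False
  have "simple_graph V R"
    using G unfolding dh_codh_graph_def by blast
  then show ?thesis
    using False by (intro simple_graph_card_le_1_bull) simp_all
qed

lemma twin_elim_to_bull:
  "dh_codh_graph V R \<Longrightarrow> \<exists>W. twin_elim R V W \<and> (\<exists>S\<subseteq>{0..<5::nat}. graph_iso W R S bull_adj)"
proof (induction "card V" arbitrary: V rule: less_induct)
  case less
  show ?case
  proof (cases "twin_free V R")
    case True
    then show ?thesis
      using twin_free_dh_codh_graph_bull[OF less.prems] twin_elim.refl by blast
  next
    case False
    then obtain u v where tw: "twins V R u v"
      unfolding twin_free_def by blast
    then have "finite V" "v \<in> V"
      using less.prems unfolding twins_def dh_codh_graph_def simple_graph_def by auto
    then have "card (V - {v}) < card V"
      by (rule card_Diff1_less)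
    moreover have "dh_codh_graph (V - {v}) R"
      using less.prems by (rule dh_codh_graph_subset) blast
    ultimately show ?thesis
      using less.hyps twin_elim.step[OF tw] by blast
  qed
qed

section \<open>Adding twins\<close>

lemma twin_free_iff:
  "twin_free V R \<longleftrightarrow> (\<forall>u\<in>V. \<forall>v\<in>V. u \<noteq> v \<longrightarrow> (\<exists>w\<in>V - {u, v}. R u w \<noteq> R v w))"
  unfolding twin_free_def twins_def by blast

lemma twin_free_house: "twin_free {0..<5} house_adj"
  unfolding twin_free_iff atLeastLessThan_5
  by (simp add: insert_Diff_if house_adj_def cycle_adj_def doubleton_eq_iff)

lemma twin_free_gem: "twin_free {0..<5} gem_adj"
  unfolding twin_free_iff atLeastLessThan_5
  by (simp add: insert_Diff_if gem_adj_def doubleton_eq_iff)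

lemma twin_free_domino: "twin_free {0..<6} domino_adj"
  unfolding twin_free_iff atLeastLessThan_6
  by (simp add: insert_Diff_if domino_adj_def cycle_adj_def doubleton_eq_iff)

lemma twin_free_cycle:
  assumes k: "5 \<le> k"
  shows "twin_free {0..<k} (cycle_adj k)"
  unfolding twin_free_iff
proof (intro ballI impI)
  fix i j assume "i \<in> {0..<k}" "j \<in> {0..<k}" "i \<noteq> j"
  then have ij: "i < k" "j < k" "i \<noteq> j"
    by auto
  show "\<exists>w\<in>{0..<k} - {i, j}. cycle_adj k i w \<noteq> cycle_adj k j w"
  proof (cases "j = (i + 1) mod k \<or> j = ((i + 1) mod k + 1) mod k")
    case False
    define w where "w = (i + 1) mod k"
    have "w < k" "w \<noteq> i" "w \<noteq> j" "cycle_adj k i w" "\<not> cycle_adj k j w"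
      unfolding w_def cycle_adj_def using False ij k by (auto simp: mod_Suc split: if_splits)
    then show ?thesis
      by auto
  next
    case True
    define w where "w = (if i = 0 then k - 1 else i - 1)"
    have "w < k" "w \<noteq> i" "w \<noteq> j" "cycle_adj k i w" "\<not> cycle_adj k j w"
      unfolding w_def cycle_adj_def using True ij k by (auto simp: mod_Suc split: if_splits)
    then show ?thesis
      by auto
  qed
qed

lemma graph_iso_swap_twin:
  assumes S: "simple_graph V R" and tw: "twins V R u v" and U: "U \<subseteq> V" "v \<in> U" "u \<notin> U"
  shows "graph_iso (insert u (U - {v})) R U R"
proof -
  let ?g = "\<lambda>x. if x = u then v else x"
  have uv: "u \<in> V" "v \<in> V" "u \<noteq> v" and nbrs: "\<forall>w\<in>V - {u, v}. R u w \<longleftrightarrow> R v w"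
    using tw unfolding twins_def by auto
  have "bij_betw ?g (insert u (U - {v})) U"
    unfolding bij_betw_def inj_on_def using U uv by auto
  moreover have "R x y \<longleftrightarrow> R (?g x) (?g y)" if "x \<in> insert u (U - {v})" "y \<in> insert u (U - {v})" for x y
    using that U uv nbrs simple_graph_sym[OF S] simple_graph_irrefl[OF S] by auto
  ultimately show ?thesis
    unfolding graph_iso_def by blast
qed

text \<open>An induced copy of a twin-free graph uses at most one of two twins, and the twin kept
  can always be chosen to be \<open>u\<close>.\<close>
lemma has_induced_delete_twin:
  assumes S: "simple_graph V R" and tw: "twins V R u v" and tf: "twin_free H F"
    and induced: "has_induced V R H F"
  shows "has_induced (V - {v}) R H F"
proof -
  obtain U where U: "U \<subseteq> V" "graph_iso U R H F"
    using induced unfolding has_induced_def by blast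
  have uv: "u \<in> V" "v \<in> V" "u \<noteq> v" and nbrs: "\<forall>w\<in>V - {u, v}. R u w \<longleftrightarrow> R v w"
    using tw unfolding twins_def by auto
  show ?thesis
  proof (cases "v \<in> U")
    case False
    then show ?thesis
      using U unfolding has_induced_def by blast
  next
    case vU: True
    show ?thesis
    proof (cases "u \<in> U")
      case uU: True
      obtain f where f: "bij_betw f U H" "\<forall>x\<in>U. \<forall>y\<in>U. R x y \<longleftrightarrow> F (f x) (f y)"
        using U(2) unfolding graph_iso_def by blast
      have "f u \<in> H" "f v \<in> H" "f u \<noteq> f v"
        using f(1) uU vU uv unfolding bij_betw_def inj_on_def by auto
      then obtain w where w: "w \<in> H - {f u, f v}" "F (f u) w \<noteq> F (f v) w"
        using tf unfolding twin_free_iff by blast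
      obtain t where t: "t \<in> U" "f t = w"
        using w(1) f(1) unfolding bij_betw_def by blast
      then have "t \<in> V - {u, v}"
        using U(1) w(1) by auto
      then show ?thesis
        using nbrs f(2) uU vU t w(2) by auto
    next
      case False
      have "graph_iso (insert u (U - {v})) R H F"
        using graph_iso_trans[OF graph_iso_swap_twin[OF S tw U(1) vU False] U(2)] .
      moreover have "insert u (U - {v}) \<subseteq> V - {v}"
        using U(1) uv by auto
      ultimately show ?thesis
        unfolding has_induced_def by blast
    qed
  qed
qed

lemma distance_hereditary_insert_twin:
  assumes S: "simple_graph V R" and tw: "twins V R u v"
    and DH: "distance_hereditary (V - {v}) R"
  shows "distance_hereditary V R"
  using DH has_induced_delete_twin[OF S tw twin_free_cycle] has_induced_delete_twin[OF S tw twin_free_house]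
    has_induced_delete_twin[OF S tw twin_free_domino] has_induced_delete_twin[OF S tw twin_free_gem]
  unfolding distance_hereditary_def by blast

lemma DH_coDH_insert_twin:
  assumes S: "simple_graph V R" and tw: "twins V R u v" and DH: "DH_coDH (V - {v}) R"
  shows "DH_coDH V R"
proof -
  have "twins V (complement_graph R) u v"
    using tw by (simp only: twins_complement)
  then show ?thesis
    using DH distance_hereditary_insert_twin[OF S tw]
      distance_hereditary_insert_twin[OF simple_graph_complement[OF S]]
    unfolding DH_coDH_def by blast
qed

section \<open>Induced subgraphs of the bull\<close>

lemma graph_iso_complement:
  assumes "graph_iso V E W F"
  shows "graph_iso V (complement_graph E) W (complement_graph F)"
proof -
  obtain f where f: "bij_betw f V W" "\<forall>x\<in>V. \<forall>y\<in>V. E x y \<longleftrightarrow> F (f x) (f y)"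
    using assms unfolding graph_iso_def by blast
  then have "\<forall>x\<in>V. \<forall>y\<in>V. complement_graph E x y \<longleftrightarrow> complement_graph F (f x) (f y)"
    unfolding complement_graph_def bij_betw_def inj_on_def by auto
  then show ?thesis
    using f(1) unfolding graph_iso_def by blast
qed

lemma graph_iso_two_neighbours:
  assumes iso: "graph_iso U B W F" and t: "t \<in> U"
    and two: "\<forall>i\<in>W. \<exists>w1\<in>W. \<exists>w2\<in>W. w1 \<noteq> w2 \<and> F i w1 \<and> F i w2"
  shows "\<exists>s1\<in>U. \<exists>s2\<in>U. s1 \<noteq> s2 \<and> B t s1 \<and> B t s2"
proof -
  obtain g where g: "bij_betw g W U" "\<forall>x\<in>W. \<forall>y\<in>W. F x y \<longleftrightarrow> B (g x) (g y)"
    using graph_iso_sym[OF iso] unfolding graph_iso_def by blast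
  obtain i where i: "i \<in> W" "g i = t"
    using g(1) t unfolding bij_betw_def by blast
  then obtain w1 w2 where "w1 \<in> W" "w2 \<in> W" "w1 \<noteq> w2" "F i w1" "F i w2"
    using two by blast
  then show ?thesis
    using g i bij_betw_apply[OF g(1)] bij_betw_imp_inj_on[OF g(1)] unfolding inj_on_def by metis
qed

lemma has_induced_into_small:
  assumes iso: "graph_iso W R S B" and S: "S \<subseteq> {0..<5::nat}" and h: "has_induced W R {0..<k::nat} F"
  shows "k \<le> 5" and "k = 5 \<Longrightarrow> graph_iso {0..<5} B {0..<5} F"
proof -
  obtain U where U: "U \<subseteq> W" "graph_iso U R {0..<k} F"
    using h unfolding has_induced_def by blast
  have "finite S" "card S \<le> 5"
    using S finite_subset card_mono[OF _ S] by auto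
  then have "finite W" "card W = card S"
    using graph_iso_finite[OF iso] graph_iso_card[OF iso] by auto
  moreover have "card U = k"
    using graph_iso_card[OF U(2)] by simp
  ultimately have "k \<le> card W" "card W \<le> 5"
    using card_mono[OF _ U(1)] \<open>card S \<le> 5\<close> by auto
  then show "k \<le> 5"
    by simp
  assume "k = 5"
  then have "U = W" "S = {0..<5}"
    using card_subset_eq[OF \<open>finite W\<close> U(1)] card_subset_eq[OF _ S] \<open>card U = k\<close> \<open>k \<le> card W\<close>
      \<open>card W \<le> 5\<close> \<open>card W = card S\<close> by auto
  then show "graph_iso {0..<5} B {0..<5} F"
    using graph_iso_trans[OF graph_iso_sym[OF iso]] U(2) \<open>k = 5\<close> by simp
qed

lemma two_neighbours_C5: "\<forall>i\<in>{0..<5}. \<exists>w1\<in>{0..<5}. \<exists>w2\<in>{0..<5}. w1 \<noteq> w2 \<and> cycle_adj 5 i w1 \<and> cycle_adj 5 i w2"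
  unfolding atLeastLessThan_5 by (simp add: cycle_adj_def)

lemma two_neighbours_house: "\<forall>i\<in>{0..<5}. \<exists>w1\<in>{0..<5}. \<exists>w2\<in>{0..<5}. w1 \<noteq> w2 \<and> house_adj i w1 \<and> house_adj i w2"
  unfolding atLeastLessThan_5 by (simp add: house_adj_def cycle_adj_def doubleton_eq_iff)

lemma two_neighbours_gem: "\<forall>i\<in>{0..<5}. \<exists>w1\<in>{0..<5}. \<exists>w2\<in>{0..<5}. w1 \<noteq> w2 \<and> gem_adj i w1 \<and> gem_adj i w2"
  unfolding atLeastLessThan_5 by (simp add: gem_adj_def doubleton_eq_iff)

text \<open>Every forbidden graph has at least five vertices and minimum degree two.\<close>
lemma distance_hereditary_small_with_pendant:
  assumes iso: "graph_iso W R S B" and S: "S \<subseteq> {0..<5::nat}" and t: "t < 5"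
    and pendant: "\<forall>j<5. B t j \<longrightarrow> j = t0"
  shows "distance_hereditary W R"
proof -
  have no_copy: False if copy: "has_induced W R {0..<5::nat} F"
    and two: "\<forall>i\<in>{0..<5}. \<exists>w1\<in>{0..<5}. \<exists>w2\<in>{0..<5}. w1 \<noteq> w2 \<and> F i w1 \<and> F i w2" for F
  proof -
    have "\<exists>s1\<in>{0..<5}. \<exists>s2\<in>{0..<5}. s1 \<noteq> s2 \<and> B t s1 \<and> B t s2"
      using t by (intro graph_iso_two_neighbours[OF has_induced_into_small(2)[OF iso S copy HOL.refl] _ two])
        simp
    then obtain s1 s2 where "s1 < 5" "s2 < 5" "s1 \<noteq> s2" "B t s1" "B t s2"
      by auto
    then show False
      using pendant by metis
  qed
  show ?thesis
    unfolding distance_hereditary_def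
  proof (intro conjI allI impI notI)
    fix k :: nat
    assume "5 \<le> k" and copy: "has_induced W R {0..<k} (cycle_adj k)"
    then have "k = 5"
      using has_induced_into_small(1)[OF iso S copy] by simp
    then show False
      using no_copy[OF _ two_neighbours_C5] copy by simp
  next
    assume "has_induced W R {0..<6} domino_adj"
    then show False
      using has_induced_into_small(1)[OF iso S] by fastforce
  qed (use no_copy two_neighbours_house two_neighbours_gem in blast)+
qed

lemma DH_coDH_bull_subgraph:
  assumes iso: "graph_iso W E S bull_adj" and S: "S \<subseteq> {0..<5::nat}"
  shows "DH_coDH W E"
proof -
  have "\<forall>j<5. bull_adj 3 j \<longrightarrow> j = 0" "\<forall>j<5. complement_graph bull_adj 0 j \<longrightarrow> j = 4"
    unfolding all_less_5 by (simp_all add: bull_adj_def complement_graph_def doubleton_eq_iff)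
  then show ?thesis
    unfolding DH_coDH_def
    using distance_hereditary_small_with_pendant[OF iso S, of 3 0]
      distance_hereditary_small_with_pendant[OF graph_iso_complement[OF iso] S, of 0 4]
    by simp
qed

lemma DH_coDH_if_twin_elim_bull:
  assumes "twin_elim R V W" "simple_graph V R" "\<exists>S\<subseteq>{0..<5::nat}. graph_iso W R S bull_adj"
  shows "DH_coDH V R"
  using assms
proof (induction rule: twin_elim.induct)
  case (refl V)
  then show ?case
    using DH_coDH_bull_subgraph by blast
next
  case (step V u v W)
  have "simple_graph (V - {v}) R"
    using step.prems(1) by (rule simple_graph_subset) blast
  then show ?case
    using DH_coDH_insert_twin[OF step.prems(1) step.hyps(1)] step.IH step.prems(2) by blast
qed

theorem mainTheorem7:
  fixes V :: "'a set" and E :: "'a \<Rightarrow> 'a \<Rightarrow> bool"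
  assumes "simple_graph V E" and "connected_graph V E"
  shows "DH_coDH V E \<longleftrightarrow>
    (\<exists>W. twin_elim E V W \<and> (\<exists>S\<subseteq>{0..<5::nat}. graph_iso W E S bull_adj))"
proof
  assume "DH_coDH V E"
  then have "dh_codh_graph V E"
    using assms(1) unfolding dh_codh_graph_def by blast
  then show "\<exists>W. twin_elim E V W \<and> (\<exists>S\<subseteq>{0..<5::nat}. graph_iso W E S bull_adj)"
    by (rule twin_elim_to_bull)
next
  assume "\<exists>W. twin_elim E V W \<and> (\<exists>S\<subseteq>{0..<5::nat}. graph_iso W E S bull_adj)"
  then show "DH_coDH V E"
    using DH_coDH_if_twin_elim_bull assms(1) by blast
qed

end
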